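(* Let $p$ be a prime, $k\ge0$ an integer and $n\ge1$ an integer, with $n>1$ if $p=2$. Then (1) $P(p,p^k(p^n-1))=p^k(p^n-1)$; (2) $P(p,p^k(p^n+1))=p^k(p^{2n}-1)$.
   Context: For positive integers $m,N$, let $\mathbf{Z}_m$ be the integers modulo $m$ and $T:\mathbf{Z}_m^N\to\mathbf{Z}_m^N$, $T(a_0,\dots,a_{N-1})=(a_0+a_1,a_1+a_2,\dots,a_{N-1}+a_0)$. For $\mathbf{a}\in\mathbf{Z}_m^N$ the cycle length of $(T^j\mathbf{a})_{j\ge0}$ is the smallest positive integer $P$ such that there is $M$ with $T^{j+P}\mathbf{a}=T^j\mathbf{a}$ for all $j\ge M$. $P(m,N)$ denotes the maximum of these cycle lengths over all $\mathbf{a}\in\mathbf{Z}_m^N$. *)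

theory Defs
  imports "HOL-Computational_Algebra.Primes"
begin

definition vecs :: "nat \<Rightarrow> nat \<Rightarrow> (nat \<Rightarrow> nat) set" where
  "vecs m N = {a. \<forall>i. (i < N \<longrightarrow> a i < m) \<and> (N \<le> i \<longrightarrow> a i = 0)}"

definition Tmap :: "nat \<Rightarrow> nat \<Rightarrow> (nat \<Rightarrow> nat) \<Rightarrow> (nat \<Rightarrow> nat)" where
  "Tmap m N a = (\<lambda>i. if i < N then (a i + a (Suc i mod N)) mod m else 0)"

definition cycle_length :: "nat \<Rightarrow> nat \<Rightarrow> (nat \<Rightarrow> nat) \<Rightarrow> nat" where
  "cycle_length m N a =
     (LEAST P. 0 < P \<and> (\<exists>M. \<forall>j\<ge>M. (Tmap m N ^^ (j + P)) a = (Tmap m N ^^ j) a))"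

definition Pmax :: "nat \<Rightarrow> nat \<Rightarrow> nat" where
  "Pmax m N = Max (cycle_length m N ` vecs m N)"

end

theory Submission
  imports Defs "Berlekamp_Zassenhaus.Poly_Mod"
begin

(* Encode a vector a of Z_p^N as the polynomial with coefficient a_i at X^(-i mod N). Then T becomes
  multiplication by Y = X + 1 in F_p[X]/(X^N - 1), so P(p,N) is the eventual multiplicative order of
  Y modulo X^N - 1, attained by the first unit vector. For N = p^k N' the Frobenius map gives
  X^N - 1 = (X^N' - 1)^(p^k) = Y^(p^k) h^(p^k) over F_p, where X^N' - 1 = Y h. If Y has order n
  modulo h and p does not divide n, then Y^n - 1 is squarefree, so its cofactor modulo h is invertible,
  and the order of Y modulo h^(p^k) is p^k n. For q = p^n the cofactor h is 1 + Y + ... + Y^(q-2)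
  when N' = q - 1, and Y^q - Y^(q-1) - 1 when N' = q + 1; Y has order q - 1 and q^2 - 1 modulo them. *)


section \<open>Congruences of integer polynomials\<close>

context poly_mod
begin

lemma power_Mp [simp]: "Mp (Mp f ^ n) = Mp (f ^ n)"
proof (induction n)
  case (Suc n)
  have "Mp (Mp f ^ Suc n) = Mp (Mp f * Mp (Mp f ^ n))" by simp
  also have "\<dots> = Mp (f ^ Suc n)" by (simp add: Suc)
  finally show ?case .
qed simp

lemma eq_m_add: "f =m f' \<Longrightarrow> g =m g' \<Longrightarrow> f + g =m f' + g'"
  by (metis plus_Mp)

lemma eq_m_diff: "f =m f' \<Longrightarrow> g =m g' \<Longrightarrow> f - g =m f' - g'"
  by (metis minus_Mp)

lemma eq_m_mult: "f =m f' \<Longrightarrow> g =m g' \<Longrightarrow> f * g =m f' * g'"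
  by (metis mult_Mp)

lemma eq_m_power: "f =m g \<Longrightarrow> f ^ n =m g ^ n"
  by (metis power_Mp)

lemma eq_m_0_iff_coeff: "f =m 0 \<longleftrightarrow> (\<forall>i. m dvd coeff f i)"
  by (auto simp: poly_eq_iff Mp_coeff M_def)

lemma eq_m_iff_diff_eq_m_0: "f =m g \<longleftrightarrow> f - g =m 0"
proof
  assume "f =m g"
  then have "Mp (f - g) = Mp (Mp g - g)" by (metis minus_Mp(1))
  then show "f - g =m 0" by simp
next
  assume "f - g =m 0"
  then have "Mp (g + (f - g)) = Mp g" by (metis plus_Mp(2) Mp_0 add.right_neutral)
  then show "f =m g" by simp
qed

lemma eq_m_smult_m: "f + smult m g =m f"
  by (metis Mp_smult_m_0 add.right_neutral plus_Mp(2))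

lemma dvdm_refl [simp]: "f dvdm f"
  unfolding dvdm_def by (rule exI[of _ 1]) simp

lemma dvdm_eq_m_0: "g =m 0 \<Longrightarrow> f dvdm g"
  unfolding dvdm_def by (rule exI[of _ 0]) simp

lemma dvdm_cong: "g =m g' \<Longrightarrow> f dvdm g \<longleftrightarrow> f dvdm g'"
  by (metis dvdm_Mp)

lemma dvdm_cong_left: "f =m f' \<Longrightarrow> f dvdm g \<longleftrightarrow> f' dvdm g"
  by (metis Mp_dvdm)

lemma dvdm_trans:
  assumes "f dvdm g" and "g dvdm h"
  shows "f dvdm h"
proof -
  obtain r s where "h =m g * r" and "g =m f * s" using assms unfolding dvdm_def by blast
  then have "h =m f * (s * r)" by (metis eq_m_mult[of g "f * s" r r] mult.assoc)
  then show ?thesis unfolding dvdm_def by blast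
qed

lemma dvdm_mult_left: "f dvdm g \<Longrightarrow> f dvdm h * g"
  using dvdm_factor by (simp add: mult.commute)

lemma dvdm_diff: "f dvdm g \<Longrightarrow> f dvdm h \<Longrightarrow> f dvdm g - h"
  using dvdm_add[of f g "- h"] by simp

lemma dvdm_mult_mult: "f dvdm g \<Longrightarrow> h * f dvdm h * g"
  unfolding dvdm_def by (metis mult.assoc mult_Mp(2))

lemma dvdm_power_diff: "f dvdm a - b \<Longrightarrow> f dvdm a ^ n - b ^ n"
  by (metis dvdm_factor power_diff_sumr2)

lemma dvdm_power_mult_cancel:
  assumes unit: "f dvdm a * u - 1" and dvd: "f dvdm a ^ j * g"
  shows "f dvdm g"
proof -
  have "f dvdm g * ((a * u) ^ j - 1 ^ j)" by (rule dvdm_mult_left[OF dvdm_power_diff[OF unit]])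
  then have "f dvdm g * ((a * u) ^ j - 1)" by simp
  moreover have "g = u ^ j * (a ^ j * g) - g * ((a * u) ^ j - 1)"
    by (simp add: power_mult_distrib right_diff_distrib mult_ac)
  moreover have "f dvdm u ^ j * (a ^ j * g)" using dvd by (rule dvdm_mult_left)
  ultimately show ?thesis using dvdm_diff by metis
qed

definition mult_order_m :: "int poly \<Rightarrow> int poly \<Rightarrow> nat \<Rightarrow> bool" where
  "mult_order_m h a n \<longleftrightarrow>
     0 < n \<and> h dvdm a ^ n - 1 \<and> (\<forall>d. 0 < d \<longrightarrow> d < n \<longrightarrow> \<not> h dvdm a ^ d - 1)"

lemma mult_order_m_dvd:
  assumes ord: "mult_order_m h a n" and dvd: "h dvdm a ^ k - 1"
  shows "n dvd k"
proof (rule ccontr)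
  assume "\<not> n dvd k"
  then have pos: "0 < k mod n" and less: "k mod n < n"
    using ord by (auto simp: mult_order_m_def mod_greater_zero_iff_not_dvd)
  have "a ^ k = a ^ (k mod n) * (a ^ n) ^ (k div n)"
    by (metis power_add power_mult mod_div_mult_eq mult.commute add.commute)
  then have split: "a ^ k - 1 = a ^ (k mod n) * ((a ^ n) ^ (k div n) - 1 ^ (k div n)) + (a ^ (k mod n) - 1)"
    by (simp add: algebra_simps)
  have "h dvdm (a ^ n) ^ (k div n) - 1 ^ (k div n)"
    using ord by (intro dvdm_power_diff) (simp add: mult_order_m_def)
  then have "h dvdm a ^ (k mod n) - 1"
    using dvdm_diff[OF dvd dvdm_mult_left] unfolding split by (metis add_diff_cancel_left')
  then show False using ord pos less by (auto simp: mult_order_m_def)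
qed

end

context poly_mod_2
begin

lemma monic_mult_eq_m_0:
  assumes h: "monic h" and hg: "h * g =m 0"
  shows "g =m 0"
proof (rule ccontr)
  assume "\<not> g =m 0"
  then have lc: "M (lead_coeff (Mp g)) \<noteq> 0"
    by (metis Mp_0 Mp_Mp Mp_coeff leading_coeff_0_iff)
  have "coeff (h * Mp g) (degree h + degree (Mp g)) = lead_coeff (Mp g)"
    using h by (simp add: coeff_mult_degree_sum)
  then have "coeff (Mp (h * g)) (degree h + degree (Mp g)) = M (lead_coeff (Mp g))"
    by (metis Mp_coeff mult_Mp(2))
  also have "Mp (h * g) = 0" using hg by simp
  finally show False using lc by simp
qed

lemma eq_m_mult_cancel_monic: "monic h \<Longrightarrow> h * f =m h * g \<Longrightarrow> f =m g"
  using monic_mult_eq_m_0[of h "f - g"] eq_m_iff_diff_eq_m_0[of "h * f"] eq_m_iff_diff_eq_m_0[of f]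
  by (simp add: right_diff_distrib)

lemma dvdm_mult_cancel_monic:
  assumes h: "monic h" and dvd: "h * f dvdm h * g"
  shows "f dvdm g"
proof -
  obtain r where "h * g =m h * f * r" using dvd unfolding dvdm_def by blast
  then have "h * g =m h * (f * r)" by (simp add: mult.assoc)
  then have "g =m f * r" by (rule eq_m_mult_cancel_monic[OF h])
  then show ?thesis unfolding dvdm_def by blast
qed

lemma dvdm_degree_less: "monic h \<Longrightarrow> h dvdm f \<Longrightarrow> degree f < degree h \<Longrightarrow> f =m 0"
  using dvdm_degree by fastforce

end


(* Written in simp normal form: the simplifier rewrites [:0, 1:] = pCons 0 (pCons 1 0) to pCons 0 1. *)

abbreviation X :: "int poly" where "X \<equiv> pCons 0 1"

abbreviation Y :: "int poly" where "Y \<equiv> pCons 1 1"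

lemma Y_eq_X_plus_one: "Y = X + 1"
  by (rule poly_eqI) (simp add: coeff_pCons split: nat.split)

lemma degree_linear_power': "degree (pCons c 1 ^ n) = n"
  using degree_linear_power[of c n] by simp

lemma monic_linear_power_minus_one:
  fixes c :: int
  assumes "N > 0"
  shows "degree (pCons c 1 ^ N - 1) = N" and "monic (pCons c 1 ^ N - 1)"
proof -
  have eq: "pCons c 1 ^ N - 1 = pCons c 1 ^ N + (- 1)" by simp
  have less: "degree (- 1 :: int poly) < degree (pCons c 1 ^ N)"
    unfolding degree_linear_power' using assms by simp
  show "degree (pCons c 1 ^ N - 1) = N"
    unfolding eq degree_add_eq_left[OF less] by (rule degree_linear_power')
  have "pCons c 1 ^ N - 1 = - 1 + pCons c 1 ^ N" by simp
  then show "monic (pCons c 1 ^ N - 1)"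
    using lead_coeff_add_le[OF less] by (simp add: monic_power)
qed

lemma X_power_eq_monom: "X ^ N = monom 1 N"
  by (induction N) (simp_all add: monom_Suc)

lemma X_mult_sum_Y_power: "X * (\<Sum>i<m. Y ^ i) = Y ^ m - 1"
proof -
  have "Y - 1 = X" by (simp add: Y_eq_X_plus_one)
  then show ?thesis using power_diff_sumr2[of Y m 1] by (simp only: power_one mult_1_left)
qed

lemma monic_sum_Y_power:
  assumes m: "m > 0"
  shows "degree (\<Sum>i<m. Y ^ i) = m - 1" and "monic (\<Sum>i<m. Y ^ i)"
proof -
  define h where "h = (\<Sum>i<m. Y ^ i)"
  have Xh: "X * h = Y ^ m - 1" unfolding h_def by (rule X_mult_sum_Y_power)
  have "h \<noteq> 0" using Xh monic_linear_power_minus_one(1)[OF m, of 1] m by auto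
  then have "degree (X * h) = Suc (degree h)" "lead_coeff (X * h) = lead_coeff h"
    by (simp_all add: degree_mult_eq lead_coeff_mult)
  then show "degree h = m - 1" "monic h"
    unfolding Xh using monic_linear_power_minus_one[OF m, of 1] by simp_all
qed

(* For q a power of p, the cofactor of Y in X^(q+1) - 1 modulo p (X_power_succ_factorization below). *)

definition succ_cofactor :: "nat \<Rightarrow> int poly" where
  "succ_cofactor q = Y ^ q - Y ^ (q - 1) - 1"

lemma succ_cofactor_eq: "q > 0 \<Longrightarrow> succ_cofactor q = Y ^ (q - 1) * X - 1"
  unfolding succ_cofactor_def Y_eq_X_plus_one
  by (cases q) (simp_all add: algebra_simps)

lemma monic_succ_cofactor:
  assumes "q > 0"
  shows "degree (succ_cofactor q) = q" and "monic (succ_cofactor q)"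
proof -
  have eq: "succ_cofactor q = - (Y ^ (q - 1) + 1) + Y ^ q" unfolding succ_cofactor_def by simp
  have "degree (Y ^ (q - 1) + 1) \<le> q - 1"
    by (intro degree_add_le) (simp_all add: degree_linear_power')
  then have less: "degree (- (Y ^ (q - 1) + 1)) < degree (Y ^ q)"
    unfolding degree_minus degree_linear_power' using assms by linarith
  show "degree (succ_cofactor q) = q"
    unfolding eq degree_add_eq_right[OF less] by (rule degree_linear_power')
  show "monic (succ_cofactor q)"
    unfolding eq lead_coeff_add_le[OF less] by (simp add: monic_power)
qed

context poly_mod_2
begin

lemma Y_power_eq_m_X_power_iff: "Y ^ e =m X ^ c \<longleftrightarrow> e = 0 \<and> c = 0"
proof
  assume eq: "Y ^ e =m X ^ c"
  have "M (coeff (Y ^ e) i) = M (coeff (X ^ c) i)" for i using eq by (metis Mp_coeff)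
  from this[of 0] have "c = 0" using m1 by (auto simp: coeff_0_power M_def power_0_left split: if_splits)
  moreover from this eq have "M (coeff (Y ^ e) e) = M (coeff 1 e)" by (metis Mp_coeff power_0)
  moreover have "coeff (Y ^ e) e = 1"
    using monic_power[of Y e] degree_linear_power'[of "1::int" e] by simp
  ultimately show "e = 0 \<and> c = 0"
    using m1 by (auto simp: coeff_1 M_def split: if_splits)
qed simp

lemma succ_cofactor_dvdm_Y_power_diff_X_power:
  assumes q: "q > 0" and dvd: "succ_cofactor q dvdm Y ^ e - X ^ c" and e: "e < q" and c: "c < q"
  shows "e = 0 \<and> c = 0"
proof -
  have "degree (Y ^ e - X ^ c) < degree (succ_cofactor q)"
    using degree_diff_le_max[of "Y ^ e" "X ^ c"] e c
    unfolding monic_succ_cofactor(1)[OF q] degree_linear_power' by simp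
  then have "Y ^ e - X ^ c =m 0" by (rule dvdm_degree_less[OF monic_succ_cofactor(2)[OF q] dvd])
  then show ?thesis using eq_m_iff_diff_eq_m_0 Y_power_eq_m_X_power_iff by blast
qed

end


section \<open>Polynomials modulo a prime\<close>

lemma power_one_add_diff_one: "\<exists>q. (1 + v) ^ r - 1 = v * (of_nat r + v * q :: 'a :: comm_ring_1)"
proof (induction r)
  case 0
  show ?case by (rule exI[of _ 0]) simp
next
  case (Suc r)
  then obtain q where "(1 + v) ^ r - 1 = v * (of_nat r + v * q)" by blast
  then have "(1 + v) ^ Suc r - 1 = v * (of_nat (Suc r) + v * (q + of_nat r + v * q))"
    by (simp add: algebra_simps)
  then show ?case by blast
qed

locale prime_modulus =
  fixes p :: nat
  assumes prime_p: "prime p"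
begin

sublocale poly_mod_prime "int p"
  by unfold_locales (simp add: prime_p)

lemma smult_dvdm_cancel:
  assumes "\<not> p dvd c" and "f dvdm smult (int c) g"
  shows "f dvdm g"
proof -
  have "coprime (int c) (int p)"
    using prime_imp_coprime[OF prime_p assms(1)] by (simp add: ac_simps)
  then have "M (inverse_mod (int c) (int p) * int c) = 1"
    using prime_p by (simp add: inverse_mod_coprime)
  then have "Mp (smult (inverse_mod (int c) (int p)) (smult (int c) g)) = Mp g"
    by (metis Mp_smult(1) smult_1_left smult_smult)
  moreover have "f dvdm smult (inverse_mod (int c) (int p)) (smult (int c) g)"
    using assms(2) by (rule dvdm_smult)
  ultimately show ?thesis using dvdm_cong by blast
qed

lemma add_power_prime_eq_m: "(f + g) ^ p =m f ^ p + g ^ p"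
proof -
  define b where "b k = (p choose k) div p" for k
  have p1: "p > 1" using prime_p prime_gt_1_nat by blast
  have "of_nat (p choose k) * f ^ k * g ^ (p - k) = smult (int p) (of_nat (b k) * f ^ k * g ^ (p - k))"
    if "k \<in> {1..<p}" for k
  proof -
    have "p dvd p choose k" using that prime_p by (intro dvd_choose_prime) auto
    then have "p choose k = p * b k" unfolding b_def by simp
    then show ?thesis by (simp add: of_nat_poly smult_smult)
  qed
  then have middle: "(\<Sum>k\<in>{1..<p}. of_nat (p choose k) * f ^ k * g ^ (p - k)) =
      smult (int p) (\<Sum>k\<in>{1..<p}. of_nat (b k) * f ^ k * g ^ (p - k))"
    by (simp add: smult_sum2)
  have "{..p} = insert 0 (insert p {1..<p})" using p1 by auto
  then have "(f + g) ^ p = g ^ p + (f ^ p + (\<Sum>k\<in>{1..<p}. of_nat (p choose k) * f ^ k * g ^ (p - k)))"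
    using p1 by (simp add: binomial_ring[of f g p])
  also note middle
  finally have "(f + g) ^ p = (f ^ p + g ^ p) + smult (int p) (\<Sum>k\<in>{1..<p}. of_nat (b k) * f ^ k * g ^ (p - k))"
    by (simp only: add_ac)
  then show ?thesis by (simp only: eq_m_smult_m)
qed

lemma add_power_prime_power_eq_m: "(f + g) ^ (p ^ s) =m f ^ (p ^ s) + g ^ (p ^ s)"
proof (induction s)
  case (Suc s)
  have "Mp ((f + g) ^ (p ^ Suc s)) = Mp (((f + g) ^ (p ^ s)) ^ p)"
    by (simp only: power_Suc2 power_mult)
  also have "\<dots> = Mp ((f ^ (p ^ s) + g ^ (p ^ s)) ^ p)" using Suc by (rule eq_m_power)
  also have "\<dots> = Mp ((f ^ (p ^ s)) ^ p + (g ^ (p ^ s)) ^ p)" by (rule add_power_prime_eq_m)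
  also have "\<dots> = Mp (f ^ (p ^ Suc s) + g ^ (p ^ Suc s))" by (simp only: power_Suc2 power_mult)
  finally show ?case .
qed simp

lemma minus_one_power_prime_power_eq_m: "(- 1 :: int poly) ^ (p ^ s) =m - 1"
proof (cases "odd (p ^ s)")
  case False
  then have "2 dvd p" by simp
  then have "p = 2" using prime_p two_is_prime_nat primes_dvd_imp_eq by blast
  have "(- 1 :: int poly) ^ (p ^ s) = - 1 + smult (int p) 1"
    using False unfolding \<open>p = 2\<close> by (simp add: numeral_poly)
  then show ?thesis by (simp only: eq_m_smult_m)
qed simp

lemma diff_one_power_prime_power_eq_m: "(f - 1) ^ (p ^ s) =m f ^ (p ^ s) - 1"
  using add_power_prime_power_eq_m[of f "- 1" s] minus_one_power_prime_power_eq_m[of s]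
  by (metis diff_conv_add_uminus eq_m_add)

lemma dvdm_power_diff_one:
  assumes "f dvdm g - 1"
  shows "f ^ (p ^ s) dvdm g ^ (p ^ s) - 1"
proof -
  obtain h where "g - 1 =m f * h" using assms unfolding dvdm_def by blast
  then have "(g - 1) ^ (p ^ s) =m f ^ (p ^ s) * h ^ (p ^ s)"
    by (metis eq_m_power power_mult_distrib)
  then have "g ^ (p ^ s) - 1 =m f ^ (p ^ s) * h ^ (p ^ s)"
    using diff_one_power_prime_power_eq_m by metis
  then show ?thesis unfolding dvdm_def by blast
qed

lemma cofactor_pderiv_dvdm:
  assumes fac: "Y ^ n - 1 =m e * h"
  shows "h dvdm e * pderiv h - smult (int n) (Y ^ (n - 1))"
proof -
  define r where "r = Dp (Y ^ n - 1 - e * h)"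
  have "Y ^ n - 1 - e * h =m 0" using fac eq_m_iff_diff_eq_m_0 by blast
  then have "Y ^ n - 1 = e * h + smult (int p) r"
    using Dp_Mp_eq[of "Y ^ n - 1 - e * h"] unfolding r_def by (simp add: algebra_simps)
  then have "pderiv (Y ^ n - 1) = pderiv (e * h + smult (int p) r)" by simp
  then have "e * pderiv h - smult (int n) (Y ^ (n - 1)) = - (h * pderiv e) + smult (int p) (- pderiv r)"
    by (simp add: pderiv_diff pderiv_power pderiv_pCons pderiv_mult pderiv_add pderiv_smult algebra_simps)
  also have "\<dots> =m - (h * pderiv e)" by (rule eq_m_smult_m)
  finally have "e * pderiv h - smult (int n) (Y ^ (n - 1)) =m - (h * pderiv e)" .
  moreover have "h dvdm - (h * pderiv e)" by (rule dvd_imp_dvdm) simp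
  ultimately show ?thesis using dvdm_cong by blast
qed

(* Since p does not divide n, the right-hand side n Y^(n-1) above is invertible modulo h, hence so is
  the cofactor e; this is the squarefreeness of Y^n - 1 modulo p. *)

lemma cofactor_invertible:
  assumes ord: "mult_order_m h Y n" and n: "\<not> p dvd n" and fac: "Y ^ n - 1 =m e * h"
  shows "\<exists>u. h dvdm e * u - 1"
proof -
  define c where "c = inverse_mod (int n) (int p)"
  have "coprime (int n) (int p)"
    using prime_imp_coprime[OF prime_p n] by (simp add: ac_simps)
  then have "M (c * int n) = 1"
    unfolding c_def using prime_p by (simp add: inverse_mod_coprime)
  then have "smult (c * int n) (Y ^ n) =m Y ^ n" by (metis Mp_smult(1) smult_1_left)
  moreover have "h dvdm Y ^ n - 1" using ord by (simp add: mult_order_m_def)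
  ultimately have "h dvdm smult (c * int n) (Y ^ n) - 1" using dvdm_cong eq_m_diff by blast
  moreover have "h dvdm smult c Y * (e * pderiv h - smult (int n) (Y ^ (n - 1)))"
    using fac by (intro dvdm_mult_left cofactor_pderiv_dvdm)
  moreover have "n > 0" using ord by (simp add: mult_order_m_def)
  then have "e * smult c (y * pderiv h) - 1 =
      smult c y * (e * pderiv h - smult (int n) (y ^ (n - 1))) + (smult (c * int n) (y ^ n) - 1)"
    for y :: "int poly"
    using power_minus_mult[of n y] by (simp add: algebra_simps smult_diff_right mult_smult_right)
  ultimately show ?thesis by (metis dvdm_add)
qed

(* With V = (Y^n - 1)^(p^s) = (e h)^(p^s), Frobenius gives Y^(n p^s r) - 1 = (1 + V)^r - 1 = V (r + V q).
  Cancelling h^(p^s) leaves h dividing e^(p^s) r, impossible since e and r are invertible modulo h. *)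

lemma not_dvdm_Y_power_minus_one:
  assumes ord: "mult_order_m h Y n" and n: "\<not> p dvd n" and h: "monic h" "degree h > 0"
    and r: "\<not> p dvd r"
  shows "\<not> h ^ (p ^ s) * h dvdm Y ^ (n * (p ^ s * r)) - 1"
proof
  assume dvd: "h ^ (p ^ s) * h dvdm Y ^ (n * (p ^ s * r)) - 1"
  obtain e where e: "Y ^ n - 1 =m h * e" using ord by (auto simp: mult_order_m_def dvdm_def)
  define V where "V = (Y ^ n - 1) ^ (p ^ s)"
  obtain q where q: "(1 + V) ^ r - 1 = V * (of_nat r + V * q)"
    using power_one_add_diff_one by blast
  have V: "V =m h ^ (p ^ s) * e ^ (p ^ s)"
    unfolding V_def power_mult_distrib[symmetric] using e by (rule eq_m_power)
  have "Y ^ (n * (p ^ s * r)) = ((1 + (Y ^ n - 1)) ^ (p ^ s)) ^ r" by (simp add: power_mult)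
  moreover have "(1 + (Y ^ n - 1)) ^ (p ^ s) =m 1 + V"
    using add_power_prime_power_eq_m[of 1 "Y ^ n - 1" s] unfolding V_def by simp
  ultimately have "Y ^ (n * (p ^ s * r)) - 1 =m (1 + V) ^ r - 1" by (metis eq_m_diff eq_m_power)
  also have "(1 + V) ^ r - 1 = V * (of_nat r + V * q)" by (rule q)
  finally have "Y ^ (n * (p ^ s * r)) - 1 =m h ^ (p ^ s) * (e ^ (p ^ s) * (of_nat r + V * q))"
    using V by (metis eq_m_mult mult.assoc)
  then have "h dvdm e ^ (p ^ s) * (of_nat r + V * q)"
    using dvd dvdm_cong dvdm_mult_cancel_monic[OF monic_power[OF h(1)]] by blast
  moreover have "h dvdm e ^ (p ^ s) * (V * q)"
  proof -
    have "h dvd h ^ (p ^ s) * e ^ (p ^ s)" using prime_gt_0_nat[OF prime_p] by (simp add: dvd_mult2)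
    then have "h dvdm V" using dvdm_cong[OF V] dvd_imp_dvdm by blast
    then show ?thesis by (intro dvdm_mult_left dvdm_factor)
  qed
  ultimately have "h dvdm e ^ (p ^ s) * of_nat r" using dvdm_diff by (fastforce simp: distrib_left)
  moreover obtain u where "h dvdm e * u - 1"
    using cofactor_invertible[OF ord n, of e] e by (auto simp: mult.commute)
  ultimately have "h dvdm of_nat r" using dvdm_power_mult_cancel by blast
  then have "h dvdm smult (int r) 1" by (simp add: of_nat_poly)
  then have "h dvdm 1" by (rule smult_dvdm_cancel[OF r])
  then have "1 =m 0" using h(2) by (intro dvdm_degree_less[OF h(1)]) simp_all
  then show False by simp
qed

lemma mult_order_m_prime_power_dvd:
  assumes ord: "mult_order_m h Y n" and n: "\<not> p dvd n" and h: "monic h" "degree h > 0"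
    and dvd: "h ^ (p ^ k) dvdm Y ^ P - 1" and P: "P > 0"
  shows "p ^ k * n dvd P"
proof -
  have p0: "p > 0" using prime_gt_0_nat[OF prime_p] .
  have "h dvdm Y ^ P - 1" using dvdm_trans[OF dvd_imp_dvdm dvd] p0 by simp
  then obtain r where r: "P = n * r" using mult_order_m_dvd[OF ord] by blast
  define s where "s = multiplicity p r"
  define r' where "r' = r div p ^ s"
  have "r > 0" using r P by simp
  then have r': "r = p ^ s * r'" "\<not> p dvd r'"
    using multiplicity_dvd[of p r] multiplicity_decompose[of r p] prime_p
    unfolding s_def r'_def by (auto simp: prime_nat_iff)
  show ?thesis
  proof (cases "k \<le> s")
    case True
    then show ?thesis unfolding r r'(1) by (simp add: le_imp_power_dvd mult_dvd_mono)
  next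
    case False
    have "p ^ s + 1 \<le> 2 * p ^ s" using p0 by simp
    also have "\<dots> \<le> p ^ Suc s" using prime_ge_2_nat[OF prime_p] by simp
    also have "\<dots> \<le> p ^ k" using False p0 by (intro power_increasing) auto
    finally have "h ^ (p ^ s) * h dvd h ^ (p ^ k)" by (metis le_imp_power_dvd power_add power_one_right)
    then have "h ^ (p ^ s) * h dvdm Y ^ (n * (p ^ s * r')) - 1"
      using dvdm_trans[OF dvd_imp_dvdm dvd] unfolding r r'(1) by blast
    then show ?thesis using not_dvdm_Y_power_minus_one[OF ord n h r'(2)] by contradiction
  qed
qed

end


section \<open>The map T as multiplication by Y\<close>

(* The entry a_i becomes the coefficient of X^((N - i) mod N), so the vector stands for the sum of the
  a_i X^(-i) modulo X^N - 1; in this orientation Tmap is multiplication by Y = 1 + X. *)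

definition poly_of_vec :: "nat \<Rightarrow> (nat \<Rightarrow> nat) \<Rightarrow> int poly" where
  "poly_of_vec N a = Poly (map (\<lambda>e. int (a ((N - e) mod N))) [0..<N])"

lemma coeff_poly_of_vec:
  "coeff (poly_of_vec N a) e = (if e < N then int (a ((N - e) mod N)) else 0)"
  unfolding poly_of_vec_def coeff_Poly nth_default_def by simp

lemma degree_poly_of_vec_diff_less:
  "N > 0 \<Longrightarrow> degree (poly_of_vec N a - poly_of_vec N b) < N"
  by (rule degree_lessI) (auto simp: coeff_poly_of_vec)

lemma poly_of_vec_unit_vec: "N > 0 \<Longrightarrow> poly_of_vec N (\<lambda>i. if i = 0 then 1 else 0) = 1"
  by (rule poly_eqI) (auto simp: coeff_poly_of_vec coeff_1 mod_if)

lemma Y_mult_poly_of_vec: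
  assumes N: "N > 0"
  shows "Y * poly_of_vec N a =
    poly_of_vec N (\<lambda>i. a i + a (Suc i mod N)) + smult (int (a (1 mod N))) (X ^ N - 1)"
proof (rule poly_eqI)
  fix e
  have "Y * poly_of_vec N a = poly_of_vec N a + pCons 0 (poly_of_vec N a)" by simp
  moreover have "(N - (e - 1)) mod N = Suc (N - e) mod N" if "0 < e" "e < N"
    using that by (simp add: Suc_diff_le)
  ultimately show "coeff (Y * poly_of_vec N a) e =
    coeff (poly_of_vec N (\<lambda>i. a i + a (Suc i mod N)) + smult (int (a (1 mod N))) (X ^ N - 1)) e"
    using N unfolding X_power_eq_monom
    by (cases e) (auto simp: coeff_poly_of_vec coeff_monom coeff_1 coeff_pCons intro!: arg_cong[where f = a])
qed

lemma finite_vecs: "finite (vecs m N)"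
proof -
  have "vecs m N = {a. \<forall>i. (i \<in> {..<N} \<longrightarrow> a i \<in> {..<m}) \<and> (i \<notin> {..<N} \<longrightarrow> a i = 0)}"
    unfolding vecs_def by auto
  then show ?thesis using finite_set_of_finite_funs[of "{..<N}" "{..<m}" 0] by simp
qed

lemma Tmap_funpow_vecs: "m > 0 \<Longrightarrow> a \<in> vecs m N \<Longrightarrow> (Tmap m N ^^ j) a \<in> vecs m N"
  by (induction j) (auto simp: vecs_def Tmap_def)

context prime_modulus
begin

lemma poly_of_vec_Tmap:
  assumes N: "N > 0"
  shows "(X ^ N - 1) dvdm Y * poly_of_vec N a - poly_of_vec N (Tmap p N a)"
proof -
  have mod_p: "int p dvd int (x mod p) - int x" for x
    by (metis mod_eq_dvd_iff mod_mod_trivial of_nat_mod)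
  have "int p dvd coeff (poly_of_vec N (Tmap p N a) - poly_of_vec N (\<lambda>i. a i + a (Suc i mod N))) e" for e
  proof (cases "e < N")
    case True
    then have "(N - e) mod N < N" using N by simp
    then show ?thesis
      using True mod_p[of "a ((N - e) mod N) + a (Suc ((N - e) mod N) mod N)"]
      by (simp add: coeff_poly_of_vec Tmap_def)
  qed (simp add: coeff_poly_of_vec)
  then have Tmap_eq: "poly_of_vec N (Tmap p N a) =m poly_of_vec N (\<lambda>i. a i + a (Suc i mod N))"
    unfolding eq_m_iff_diff_eq_m_0[of "poly_of_vec N (Tmap p N a)"] eq_m_0_iff_coeff by blast
  have "Y * poly_of_vec N a - poly_of_vec N (Tmap p N a) =m smult (int (a (1 mod N))) (X ^ N - 1)"
    unfolding Y_mult_poly_of_vec[OF N] using eq_m_diff[OF refl Tmap_eq] by simp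
  moreover have "(X ^ N - 1) dvdm smult (int (a (1 mod N))) (X ^ N - 1)"
    by (intro dvdm_smult dvdm_refl)
  ultimately show ?thesis using dvdm_cong by blast
qed

lemma poly_of_vec_Tmap_funpow:
  assumes N: "N > 0"
  shows "(X ^ N - 1) dvdm Y ^ j * poly_of_vec N a - poly_of_vec N ((Tmap p N ^^ j) a)"
proof (induction j)
  case (Suc j)
  let ?b = "(Tmap p N ^^ j) a"
  have "Y ^ Suc j * poly_of_vec N a - poly_of_vec N ((Tmap p N ^^ Suc j) a) =
      Y * (Y ^ j * poly_of_vec N a - poly_of_vec N ?b) + (Y * poly_of_vec N ?b - poly_of_vec N (Tmap p N ?b))"
    by (simp add: algebra_simps)
  then show ?case
    using dvdm_add[OF dvdm_mult_left[OF Suc.IH] poly_of_vec_Tmap[OF N]] by (simp only:)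
qed (simp add: dvdm_eq_m_0)

lemma poly_of_vec_inj:
  assumes N: "N > 0" and a: "a \<in> vecs p N" and b: "b \<in> vecs p N"
    and dvd: "(X ^ N - 1) dvdm poly_of_vec N a - poly_of_vec N b"
  shows "a = b"
proof
  fix i
  have "poly_of_vec N a - poly_of_vec N b =m 0"
  proof (rule dvdm_degree_less[OF monic_linear_power_minus_one(2)[OF N] dvd])
    show "degree (poly_of_vec N a - poly_of_vec N b) < degree (X ^ N - 1)"
      unfolding monic_linear_power_minus_one(1)[OF N] by (rule degree_poly_of_vec_diff_less[OF N])
  qed
  then have dvd_coeff: "int p dvd coeff (poly_of_vec N a) e - coeff (poly_of_vec N b) e" for e
    unfolding eq_m_0_iff_coeff by simp
  show "a i = b i"
  proof (cases "i < N")
    case True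
    then have "(N - (N - i) mod N) mod N = i" by (cases "i = 0") auto
    moreover have "(N - i) mod N < N" using N by simp
    ultimately have "int p dvd int (a i) - int (b i)"
      using dvd_coeff[of "(N - i) mod N"] by (simp add: coeff_poly_of_vec)
    moreover have "a i < p" "b i < p" using a b True unfolding vecs_def by auto
    ultimately show ?thesis by (metis mod_eq_dvd_iff of_nat_mod mod_less of_nat_eq_iff)
  next
    case False
    then show ?thesis using a b unfolding vecs_def by auto
  qed
qed

lemma Tmap_funpow_eq_iff:
  assumes N: "N > 0" and a: "a \<in> vecs p N"
  shows "(Tmap p N ^^ i) a = (Tmap p N ^^ j) a \<longleftrightarrow> (X ^ N - 1) dvdm (Y ^ i - Y ^ j) * poly_of_vec N a"
    (is "?a\<^sub>i = ?a\<^sub>j \<longleftrightarrow> _")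
proof -
  let ?f = "poly_of_vec N a"
  define D where "D = (Y ^ i * ?f - poly_of_vec N ?a\<^sub>i) - (Y ^ j * ?f - poly_of_vec N ?a\<^sub>j)"
  have split: "(Y ^ i - Y ^ j) * ?f = D + (poly_of_vec N ?a\<^sub>i - poly_of_vec N ?a\<^sub>j)"
    unfolding D_def by (simp add: algebra_simps)
  have D: "(X ^ N - 1) dvdm D"
    unfolding D_def using N by (intro dvdm_diff poly_of_vec_Tmap_funpow)
  have "?a\<^sub>i \<in> vecs p N" "?a\<^sub>j \<in> vecs p N"
    using a prime_gt_0_nat[OF prime_p] by (simp_all add: Tmap_funpow_vecs)
  moreover have "(X ^ N - 1) dvdm (Y ^ i - Y ^ j) * ?f \<longleftrightarrow>
      (X ^ N - 1) dvdm poly_of_vec N ?a\<^sub>i - poly_of_vec N ?a\<^sub>j"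
    unfolding split using D dvdm_add[OF D] dvdm_diff[OF _ D] by (metis add_diff_cancel_left')
  ultimately show ?thesis
    using poly_of_vec_inj[OF N] by (auto simp: dvdm_eq_m_0)
qed

lemma Pmax_eqI:
  assumes N: "N > 0" and L: "L > 0"
    and period: "(X ^ N - 1) dvdm Y ^ M\<^sub>0 * (Y ^ L - 1)"
    and minimal: "\<And>M P. 0 < P \<Longrightarrow> (X ^ N - 1) dvdm Y ^ M * (Y ^ P - 1) \<Longrightarrow> L \<le> P"
  shows "Pmax p N = L"
proof -
  let ?T = "Tmap p N"
  have periodic: "(?T ^^ (j + L)) a = (?T ^^ j) a" if "a \<in> vecs p N" "j \<ge> M\<^sub>0" for a j
  proof -
    have "(Y ^ (j + L) - Y ^ j) * poly_of_vec N a = (Y ^ (j - M\<^sub>0) * poly_of_vec N a) * (Y ^ M\<^sub>0 * (Y ^ L - 1))"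
      using \<open>j \<ge> M\<^sub>0\<close> by (simp add: algebra_simps flip: power_add)
    then show ?thesis
      unfolding Tmap_funpow_eq_iff[OF N that(1)] by (simp only: dvdm_mult_left[OF period])
  qed
  have le: "cycle_length p N a \<le> L" if "a \<in> vecs p N" for a
    unfolding cycle_length_def by (rule Least_le) (use L periodic[OF that] in blast)
  define e :: "nat \<Rightarrow> nat" where "e i = (if i = 0 then 1 else 0)" for i
  have e: "e \<in> vecs p N" using N prime_gt_1_nat[OF prime_p] by (auto simp: vecs_def e_def)
  have "cycle_length p N e = L"
    unfolding cycle_length_def
  proof (rule Least_equality)
    show "0 < L \<and> (\<exists>M. \<forall>j\<ge>M. (?T ^^ (j + L)) e = (?T ^^ j) e)"
      using L periodic[OF e] by blast
  next
    fix P assume "0 < P \<and> (\<exists>M. \<forall>j\<ge>M. (?T ^^ (j + P)) e = (?T ^^ j) e)"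
    then obtain M where "0 < P" "(?T ^^ (M + P)) e = (?T ^^ M) e" by blast
    moreover have "poly_of_vec N e = 1" unfolding e_def by (rule poly_of_vec_unit_vec[OF N])
    ultimately have "(X ^ N - 1) dvdm Y ^ M * (Y ^ P - 1)"
      using Tmap_funpow_eq_iff[OF N e] by (simp add: algebra_simps power_add)
    then show "L \<le> P" using minimal \<open>0 < P\<close> by blast
  qed
  then show ?thesis
    unfolding Pmax_def using le e finite_vecs by (intro Max_eqI) auto
qed

lemma Pmax_prime_power_mult:
  assumes fac: "X ^ N - 1 =m Y * h" and N: "N > 0" and h: "monic h" "degree h > 0"
    and ord: "mult_order_m h Y n" and n: "\<not> p dvd n"
  shows "Pmax p (p ^ k * N) = p ^ k * n"
proof -
  let ?t = "p ^ k"
  have t: "?t > 0" using prime_gt_0_nat[OF prime_p] by simp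
  have n0: "n > 0" using ord by (simp add: mult_order_m_def)
  have "Mp (X ^ (?t * N) - 1) = Mp ((X ^ N) ^ ?t - 1)" by (simp add: power_mult mult.commute)
  also have "\<dots> = Mp ((X ^ N - 1) ^ ?t)" by (rule diff_one_power_prime_power_eq_m[symmetric])
  also have "\<dots> = Mp ((Y * h) ^ ?t)" using fac by (rule eq_m_power)
  finally have modulus: "X ^ (?t * N) - 1 =m Y ^ ?t * h ^ ?t" by (simp only: power_mult_distrib)
  have h_t: "h ^ ?t dvdm Y ^ (?t * n) - 1"
    using dvdm_power_diff_one[of h "Y ^ n" k] ord by (simp add: mult_order_m_def power_mult mult.commute)
  show ?thesis
  proof (rule Pmax_eqI)
    show "(X ^ (?t * N) - 1) dvdm Y ^ ?t * (Y ^ (?t * n) - 1)"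
      unfolding dvdm_cong_left[OF modulus] by (rule dvdm_mult_mult[OF h_t])
  next
    fix M P
    assume P: "0 < P" and "(X ^ (?t * N) - 1) dvdm Y ^ M * (Y ^ P - 1)"
    then have "Y ^ ?t * h ^ ?t dvdm Y ^ M * (Y ^ P - 1)" using dvdm_cong_left[OF modulus] by blast
    then have "h ^ ?t dvdm Y ^ M * (Y ^ P - 1)" by (rule dvdm_trans[OF dvd_imp_dvdm, rotated]) simp
    moreover have "h ^ ?t dvdm Y * Y ^ (?t * n - 1) - 1"
      using h_t t n0 by (metis Suc_diff_1 nat_0_less_mult_iff power_Suc)
    ultimately have "h ^ ?t dvdm Y ^ P - 1" using dvdm_power_mult_cancel by blast
    then have "?t * n dvd P" using mult_order_m_prime_power_dvd[OF ord n h] P by blast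
    then show "?t * n \<le> P" using P by (rule dvd_imp_le)
  qed (use N t n0 in simp_all)
qed

end

section \<open>The cofactors of Y in X^(q - 1) - 1 and X^(q + 1) - 1\<close>

context poly_mod
begin

lemma succ_cofactor_dvdm_reduce:
  assumes q: "0 < q" and dvd: "succ_cofactor q dvdm Y ^ (q * a + b) - 1"
  shows "succ_cofactor q dvdm Y ^ (a + b) - X ^ a"
proof -
  let ?G = "succ_cofactor q"
  have inv: "?G dvdm Y ^ (q - 1) * X - 1" unfolding succ_cofactor_eq[OF q] by (rule dvdm_refl)
  have "?G dvdm Y ^ a * ((Y ^ (q - 1) * X) ^ a - 1 ^ a)" by (intro dvdm_mult_left dvdm_power_diff inv)
  moreover have "y ^ a * ((y ^ r * x) ^ a - 1 ^ a) = y ^ (a + r * a) * x ^ a - y ^ a"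
    for x y :: "int poly" and r
    by (simp add: power_mult_distrib power_add algebra_simps flip: power_mult)
  moreover have "a + (q - 1) * a = q * a" using q by (cases q) simp_all
  ultimately have Ya: "?G dvdm Y ^ (q * a) * X ^ a - Y ^ a" by metis
  have "?G dvdm Y ^ (q * a) * Y ^ b - 1" using dvd unfolding power_add .
  then have "?G dvdm X ^ a * (Y ^ (q * a) * Y ^ b - 1) - Y ^ b * (Y ^ (q * a) * X ^ a - Y ^ a)"
    by (rule dvdm_diff[OF dvdm_mult_left dvdm_mult_left[OF Ya]])
  moreover have "x ^ a * (y ^ (q * a) * y ^ b - 1) - y ^ b * (y ^ (q * a) * x ^ a - y ^ a) =
      y ^ (a + b) - x ^ a" for x y :: "int poly"
    by (simp add: power_add algebra_simps)
  ultimately show ?thesis by metis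
qed

lemma succ_cofactor_dvdm_shift:
  assumes q: "0 < q" and dvd: "succ_cofactor q dvdm Y ^ (e + q) - X ^ a"
  shows "succ_cofactor q dvdm Y ^ (e + 1) - X ^ (a + 1)"
proof -
  let ?G = "succ_cofactor q"
  have inv: "?G dvdm Y ^ (q - 1) * X - 1" unfolding succ_cofactor_eq[OF q] by (rule dvdm_refl)
  have "?G dvdm Y ^ e * Y ^ q - X ^ a" using dvd by (simp add: power_add)
  then have "?G dvdm X * (Y ^ e * Y ^ q - X ^ a) - Y ^ (e + 1) * (Y ^ (q - 1) * X - 1)"
    by (rule dvdm_diff[OF dvdm_mult_left dvdm_mult_left[OF inv]])
  moreover have "x * (y ^ e * y ^ q - x ^ a) - y ^ (e + 1) * (y ^ (q - 1) * x - 1) =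
      y ^ (e + 1) - x ^ (a + 1)" for x y :: "int poly"
    using power_minus_mult[OF q, of y] by (simp add: algebra_simps)
  ultimately show ?thesis by metis
qed

end

context prime_modulus
begin

lemma Y_power_prime_power_eq_m: "Y ^ (p ^ n) =m X ^ (p ^ n) + 1"
  using add_power_prime_power_eq_m[of X 1 n] unfolding Y_eq_X_plus_one by simp

lemma X_power_prime_power_eq_m: "X ^ (p ^ n) =m Y ^ (p ^ n) - 1"
  using eq_m_diff[OF Y_power_prime_power_eq_m[of n] refl[of "Mp 1"]] by simp

lemma X_power_pred_factorization: "X ^ (p ^ n - 1) - 1 =m Y * (\<Sum>i<p ^ n - 1. Y ^ i)"
proof -
  let ?q = "p ^ n"
  have q: "?q > 0" using prime_gt_0_nat[OF prime_p] by simp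
  have "Mp (X * (Y * (\<Sum>i<?q - 1. Y ^ i))) = Mp (Y * (Y ^ (?q - 1) - 1))"
    by (simp only: X_mult_sum_Y_power mult.left_commute[of X])
  also have "Y * (Y ^ (?q - 1) - 1) = Y ^ ?q - Y"
    using power_minus_mult[OF q, of Y] by (simp only: right_diff_distrib mult_1_right mult.commute)
  also have "Mp (Y ^ ?q - Y) = Mp (X ^ ?q + 1 - Y)"
    by (rule eq_m_diff[OF Y_power_prime_power_eq_m refl])
  also have "X ^ ?q + 1 - Y = X * (X ^ (?q - 1) - 1)"
    using q unfolding Y_eq_X_plus_one by (cases ?q) (simp_all add: algebra_simps)
  finally show ?thesis by (rule eq_m_mult_cancel_monic[symmetric, rotated]) simp
qed

lemma mult_order_m_sum_Y_power:
  assumes m: "m > 0" and p: "\<not> p dvd m"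
  shows "mult_order_m (\<Sum>i<m. Y ^ i) Y m"
proof -
  define h where "h = (\<Sum>i<m. Y ^ i)"
  have Xh: "X * h = Y ^ m - 1" unfolding h_def by (rule X_mult_sum_Y_power)
  have deg: "degree h = m - 1" and h: "monic h"
    unfolding h_def by (rule monic_sum_Y_power[OF m])+
  have "\<not> h dvdm Y ^ d - 1" if d: "0 < d" "d < m" for d
  proof
    assume dvd: "h dvdm Y ^ d - 1"
    show False
    proof (cases "d < m - 1")
      case True
      then have "Y ^ d - 1 =m 0"
        using dvd deg monic_linear_power_minus_one(1)[OF \<open>0 < d\<close>, of 1] by (intro dvdm_degree_less[OF h]) auto
      then have "Y ^ d =m X ^ 0" using eq_m_iff_diff_eq_m_0[of "Y ^ d" 1] by simp
      then show False using Y_power_eq_m_X_power_iff[of d 0] d by simp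
    next
      case False
      then have m_d: "m = Suc d" using d by simp
      define g where "g = 1 + (\<Sum>i<d. Y ^ i)"
      have "Y ^ d - 1 - h = - g" unfolding g_def h_def m_d by simp
      then have "h dvdm - g" using dvdm_diff[OF dvd dvdm_refl] by metis
      moreover have "degree g < degree h"
      proof -
        have "degree (\<Sum>i<d. Y ^ i) \<le> d - 1"
          by (intro degree_sum_le) (auto simp: degree_linear_power')
        then have "degree g \<le> d - 1" unfolding g_def by (intro degree_add_le) simp_all
        then show ?thesis unfolding deg m_d using d by simp
      qed
      ultimately have "g =m 0" using dvdm_degree_less[OF h] by simp
      moreover have "coeff g 0 = int m" unfolding g_def m_d by (simp add: coeff_sum coeff_0_power)
      ultimately show False using p eq_m_0_iff_coeff by (metis int_dvd_int_iff)
    qed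
  qed
  moreover have "h dvdm Y ^ m - 1"
    unfolding Xh[symmetric] by (intro dvd_imp_dvdm dvd_triv_right)
  ultimately show ?thesis
    unfolding h_def[symmetric] mult_order_m_def using m by blast
qed

lemma X_power_succ_factorization: "X ^ (p ^ n + 1) - 1 =m Y * succ_cofactor (p ^ n)"
proof -
  let ?q = "p ^ n"
  have q: "?q > 0" using prime_gt_0_nat[OF prime_p] by simp
  have "Mp (X ^ (?q + 1) - 1) = Mp (X ^ ?q * X - 1)" by simp
  also have "\<dots> = Mp ((Y ^ ?q - 1) * X - 1)"
    using X_power_prime_power_eq_m[of n] by (intro eq_m_diff eq_m_mult) simp_all
  also have "(Y ^ ?q - 1) * X - 1 = Y * succ_cofactor ?q"
  proof -
    have "(y ^ q - 1) * (y - 1) - 1 = y * (y ^ q - y ^ (q - 1) - 1)"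
      if "q > 0" for y :: "int poly" and q :: nat
      using power_minus_mult[OF that, of y] by (simp add: algebra_simps)
    from this[OF q, of Y] show ?thesis
      unfolding succ_cofactor_def by (simp add: Y_eq_X_plus_one)
  qed
  finally show ?thesis .
qed

lemma succ_cofactor_dvdm_X_power: "succ_cofactor (p ^ n) dvdm X ^ (p ^ n) - Y ^ (p ^ n - 1)"
proof -
  have "X ^ p ^ n - Y ^ (p ^ n - 1) =m Y ^ p ^ n - 1 - Y ^ (p ^ n - 1)"
    by (rule eq_m_diff[OF X_power_prime_power_eq_m refl])
  also have "Y ^ p ^ n - 1 - Y ^ (p ^ n - 1) = succ_cofactor (p ^ n)"
    unfolding succ_cofactor_def by (simp add: algebra_simps)
  finally show ?thesis using dvdm_cong dvdm_refl by blast
qed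

lemma succ_cofactor_dvdm_period: "succ_cofactor (p ^ n) dvdm Y ^ (p ^ n * p ^ n - 1) - 1"
proof -
  let ?q = "p ^ n"
  have q: "0 < ?q" using prime_gt_0_nat[OF prime_p] by simp
  have "succ_cofactor ?q dvdm Y ^ (?q - 1) * X - 1" unfolding succ_cofactor_eq[OF q] by (rule dvdm_refl)
  then have "succ_cofactor ?q dvdm
      (Y ^ (?q - 1) * X) ^ ?q - 1 ^ ?q - Y ^ ((?q - 1) * ?q) * (X ^ ?q - Y ^ (?q - 1))"
    by (rule dvdm_diff[OF dvdm_power_diff dvdm_mult_left[OF succ_cofactor_dvdm_X_power]])
  moreover have "(y ^ r * x) ^ q - 1 ^ q - y ^ (r * q) * (x ^ q - y ^ r) = y ^ (r * q + r) - 1"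
    for x y :: "int poly" and r q :: nat
    by (simp add: power_mult_distrib power_add algebra_simps flip: power_mult)
  moreover have "(?q - 1) * ?q + (?q - 1) = ?q * ?q - 1" using q by (cases ?q) simp_all
  ultimately show ?thesis by metis
qed

lemma succ_cofactor_not_dvdm_Y_power_diff_X_power:
  assumes b: "b < p ^ n - 1"
  shows "\<not> succ_cofactor (p ^ n) dvdm Y ^ b - X ^ (p ^ n)"
proof
  define q where "q = p ^ n"
  define G where "G = succ_cofactor q"
  have q: "0 < q" unfolding q_def using prime_gt_0_nat[OF prime_p] by simp
  have b: "b < q - 1" using b unfolding q_def .
  assume "succ_cofactor (p ^ n) dvdm Y ^ b - X ^ (p ^ n)"
  then have "G dvdm (Y ^ b - X ^ q) + (X ^ q - Y ^ (q - 1))"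
    using succ_cofactor_dvdm_X_power unfolding G_def q_def by (intro dvdm_add)
  moreover have "Y ^ b - X ^ q + (X ^ q - Y ^ (q - 1)) = - (Y ^ b * (Y ^ (q - 1 - b) - 1))"
    using b by (simp add: algebra_simps flip: power_add)
  ultimately have Yb: "G dvdm Y ^ b * (Y ^ (q - 1 - b) - 1)" by simp
  have "q - 1 = Suc (q - 2)" using b by simp
  then have "Y * (Y ^ (q - 2) * X) = Y ^ (q - 1) * X" by (simp only: power_Suc mult.assoc)
  then have "G dvdm Y * (Y ^ (q - 2) * X) - 1"
    unfolding G_def succ_cofactor_eq[OF q] by (simp only: dvdm_refl)
  then have "G dvdm Y ^ (q - 1 - b) - 1" using Yb by (rule dvdm_power_mult_cancel)
  then have "G dvdm Y ^ (q - 1 - b) - X ^ 0" by simp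
  moreover have "q - 1 - b < q" "0 < q - 1 - b" using b q by simp_all
  ultimately show False using succ_cofactor_dvdm_Y_power_diff_X_power[OF q] unfolding G_def by fastforce
qed

(* Modulo G = succ_cofactor q we have Y^(q-1) X = 1 and X^q = Y^(q-1). If Y^d = 1 with d = q a + b,
  these relations reduce it to a congruence Y^e = X^c with small exponents, which the degree of G
  excludes. *)

lemma mult_order_m_succ_cofactor:
  assumes n: "n > 0"
  shows "mult_order_m (succ_cofactor (p ^ n)) Y (p ^ n * p ^ n - 1)"
proof -
  define q where "q = p ^ n"
  define G where "G = succ_cofactor q"
  have q2: "q \<ge> 2"
    unfolding q_def using n prime_ge_2_nat[OF prime_p] self_le_power[of p n] by linarith
  then have q: "q > 0" by simp
  have small: "e = 0 \<and> c = 0" if "G dvdm Y ^ e - X ^ c" "e < q" "c < q" for e c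
    using succ_cofactor_dvdm_Y_power_diff_X_power[OF q] that unfolding G_def by blast
  have "\<not> G dvdm Y ^ d - 1" if d: "0 < d" "d < q * q - 1" for d
  proof
    assume "G dvdm Y ^ d - 1"
    moreover define a b where "a = d div q" and "b = d mod q"
    ultimately have E1: "G dvdm Y ^ (a + b) - X ^ a"
      unfolding G_def using succ_cofactor_dvdm_reduce[OF q] by simp
    have a: "a < q" unfolding a_def using d by (simp add: less_mult_imp_div_less)
    have d_ab: "d = q * a + b" and b: "b < q" unfolding a_def b_def using q by simp_all
    show False
    proof (cases "a + b < q")
      case True
      then show False using small[OF E1] d d_ab by simp
    next
      case ab: False
      define e where "e = a + b - q"
      have E2: "G dvdm Y ^ (e + 1) - X ^ (a + 1)"
        using E1 ab succ_cofactor_dvdm_shift[OF q] unfolding G_def e_def by simp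
      show False
      proof (cases "a + 1 < q")
        case True
        moreover have "e + 1 < q" unfolding e_def using True b ab by linarith
        ultimately show False using small[OF E2] by simp
      next
        case False
        then have "a + 1 = q" "e + 1 = b" using a ab unfolding e_def by simp_all
        moreover from this have "q * a = q * q - q" by (metis add_diff_cancel_right' diff_mult_distrib2 mult_1_right)
        then have "b < q - 1" using d d_ab mult_le_mono[OF q2 q2] by linarith
        ultimately show False
          using E2 succ_cofactor_not_dvdm_Y_power_diff_X_power unfolding G_def q_def by simp
      qed
    qed
  qed
  moreover have "1 < q * q" using mult_le_mono[OF q2 q2] by simp
  ultimately show ?thesis
    using succ_cofactor_dvdm_period unfolding mult_order_m_def G_def q_def by simp
qed

lemma not_dvd_diff_one: "p dvd m \<Longrightarrow> 0 < m \<Longrightarrow> \<not> p dvd m - 1"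
proof
  assume "p dvd m" and "0 < m" and "p dvd m - 1"
  then have "p dvd m - (m - 1)" using dvd_diff_nat by blast
  then have "p dvd 1" using \<open>0 < m\<close> by simp
  then show False using prime_p not_prime_unit by blast
qed

lemma Pmax_prime_power_pred:
  assumes q: "3 \<le> p ^ n"
  shows "Pmax p (p ^ k * (p ^ n - 1)) = p ^ k * (p ^ n - 1)"
proof (rule Pmax_prime_power_mult[OF X_power_pred_factorization])
  have "p dvd p ^ n" using q by (cases n) simp_all
  then show p_not_dvd: "\<not> p dvd p ^ n - 1" by (rule not_dvd_diff_one) (use q in linarith)
  have pos: "0 < p ^ n - 1" using q by simp
  then show "0 < p ^ n - 1" .
  show "monic (\<Sum>i<p ^ n - 1. Y ^ i)" by (rule monic_sum_Y_power(2)[OF pos])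
  show "0 < degree (\<Sum>i<p ^ n - 1. Y ^ i)" using monic_sum_Y_power(1)[OF pos] q by simp
  show "mult_order_m (\<Sum>i<p ^ n - 1. Y ^ i) Y (p ^ n - 1)"
    by (rule mult_order_m_sum_Y_power[OF pos p_not_dvd])
qed

lemma Pmax_prime_power_succ:
  assumes n: "0 < n"
  shows "Pmax p (p ^ k * (p ^ n + 1)) = p ^ k * (p ^ n * p ^ n - 1)"
proof (rule Pmax_prime_power_mult[OF X_power_succ_factorization])
  have q: "0 < p ^ n" using prime_gt_0_nat[OF prime_p] by simp
  show "monic (succ_cofactor (p ^ n))" "0 < degree (succ_cofactor (p ^ n))"
    using monic_succ_cofactor[OF q] q by simp_all
  show "mult_order_m (succ_cofactor (p ^ n)) Y (p ^ n * p ^ n - 1)"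
    by (rule mult_order_m_succ_cofactor[OF n])
  have "p dvd p ^ n * p ^ n" using n by simp
  then show "\<not> p dvd p ^ n * p ^ n - 1" using q by (intro not_dvd_diff_one) simp_all
qed simp

end

theorem proposition7p4:
  fixes p k n :: nat
  assumes "prime p" and "n \<ge> 1" and "p = 2 \<longrightarrow> n > 1"
  shows "Pmax p (p ^ k * (p ^ n - 1)) = p ^ k * (p ^ n - 1) \<and>
         Pmax p (p ^ k * (p ^ n + 1)) = p ^ k * (p ^ (2 * n) - 1)"
proof -
  interpret prime_modulus p by unfold_locales (rule assms(1))
  have "3 \<le> p ^ n"
  proof (cases "p = 2")
    case True
    then have "(2::nat) ^ 2 \<le> 2 ^ n" using assms(3) by (intro power_increasing) auto
    then show ?thesis using True by simp
  next
    case False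
    then have "3 \<le> p" using prime_ge_2_nat[OF assms(1)] by simp
    also have "p \<le> p ^ n" using assms(2) prime_gt_0_nat[OF assms(1)] by (simp add: self_le_power)
    finally show ?thesis .
  qed
  moreover have "p ^ (2 * n) = p ^ n * p ^ n" by (simp add: mult_2 power_add)
  ultimately show ?thesis using Pmax_prime_power_pred Pmax_prime_power_succ[of n k] assms(2) by simp
qed

end
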